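(* Let $f\in\mathbb{Z}[x,y]$ be square-free without non-constant factors in $\mathbb{Z}[x]$, $C=V(f)$, $R(x)=\operatorname{res}(f,f_y,y)$. Let $\alpha$ be a real root of $R$, $\alpha'$ the next larger real root of $R$ (or $+\infty$), $I=(\alpha,\alpha')$, and let $\varphi_1<\cdots<\varphi_{m_I}$ be the continuous functions on $I$ whose graphs form $C\cap(I\times\mathbb{R})$. Let $y_1<\cdots<y_{m_\alpha}$ be the real roots of $f(\alpha,y)$ and let $t_1<y_1<t_2<\cdots<y_{m_\alpha}<t_{m_\alpha+1}$ be rational numbers. Let $b\in I$ be rational such that $f(x,t_i)\neq 0$ for all $x\in[\alpha,b]$ and all $i=1,\ldots,m_\alpha+1$. Let $\gamma_j:=\varphi_j(b)$ be the $j$-th real root of $f(b,y)$. If $t_{i_0}<\gamma_j<t_{i_0+1}$ for some $i_0\in\{1,\ldots,m_\alpha\}$, then $\lim_{x\to\alpha^+}\varphi_j(x)=y_{i_0}$. If $\gamma_j<t_1$ (resp. $\gamma_j>t_{m_\alpha+1}$), then $\varphi_j(x)\to-\infty$ (resp. $+\infty$) as $x\to\alpha^+$.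
   Context: $\operatorname{res}(\cdot,\cdot,y)$ denotes the resultant with respect to $y$. The functions $\varphi_j$ exist by delineability of $C$ over intervals between consecutive real roots of $R$; each arc of $C$ over $I$ either tends to a real root of $f(\alpha,y)$ or to $\pm\infty$ as $x\to\alpha^+$. *)

theory Defs
  imports "HOL-Analysis.Analysis" "HOL-Computational_Algebra.Squarefree"
    "Subresultants.Resultant_Prelim"
begin

text \<open>Bivariate integer polynomials f(x,y) are represented as int poly poly:
  a polynomial in y whose coefficients are polynomials in x.\<close>

definition eval2 :: "int poly poly \<Rightarrow> real \<Rightarrow> real \<Rightarrow> real" where
  "eval2 f x y = poly (map_poly (\<lambda>c. poly (of_int_poly c) x) f) y"

definition res_y :: "int poly poly \<Rightarrow> int poly" where
  "res_y f = resultant f (pderiv f)"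

end

theory Submission
  imports Defs
begin

(* On the interval (alpha, b] the curve y = phi_j(x) never meets
   the horizontal lines y = t_i, because f(x, t_i) does not vanish there; by the
   intermediate value theorem phi_j therefore stays in the same gap between
   consecutive t_i as at x = b.  As x -> alpha+, continuity of f and compactness
   show that phi_j eventually leaves every compact set K on which f(alpha, .)
   has no zero.  Inside the gap (t_i0, t_(i0+1)) the only zero of f(alpha, .)
   is y_i0, so phi_j -> y_i0; in the outer gaps f(alpha, .) has no zero at all,
   so phi_j escapes to -infinity or +infinity. *)

lemma eval2_sum:
  "eval2 f x y = (\<Sum>i\<le>degree f. poly (of_int_poly (coeff f i)) x * y ^ i)"
proof -
  let ?p = "map_poly (\<lambda>c. poly (of_int_poly c) x) f"
  have "degree ?p \<le> degree f" by (rule degree_map_poly_le)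
  then have "eval2 f x y = poly (\<Sum>i\<le>degree f. monom (coeff ?p i) i) y"
    unfolding eval2_def by (simp add: poly_as_sum_of_monoms')
  also have "\<dots> = (\<Sum>i\<le>degree f. poly (of_int_poly (coeff f i)) x * y ^ i)"
    by (simp add: poly_sum poly_monom coeff_map_poly)
  finally show ?thesis .
qed

lemma continuous_on_eval2: "continuous_on UNIV (\<lambda>(x, y). eval2 f x y)"
  unfolding eval2_sum case_prod_beta by (intro continuous_intros)

text \<open>If a continuous F has no zero on {a} \<times> K with K compact, then it has no
  zero on a whole strip (a - \<eta>, a + \<eta>) \<times> K: the compact set {a} \<times> K has
  positive distance from the closed zero set of F.\<close>

lemma nonzero_near_compact_fibre:
  fixes F :: "real \<Rightarrow> real \<Rightarrow> real"
  assumes F: "continuous_on UNIV (\<lambda>(x, y). F x y)" and K: "compact K"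
    and nz: "\<forall>y\<in>K. F a y \<noteq> 0"
  obtains \<eta> where "\<eta> > 0" "\<And>x y. \<bar>x - a\<bar> < \<eta> \<Longrightarrow> y \<in> K \<Longrightarrow> F x y \<noteq> 0"
proof -
  let ?Z = "{p \<in> UNIV. (\<lambda>(x, y). F x y) p = 0}"
  have closed: "closed ?Z" by (rule continuous_closed_preimage_constant[OF F closed_UNIV])
  have compact: "compact ({a} \<times> K)" by (intro compact_Times K compact_sing)
  have disjoint: "{a} \<times> K \<inter> ?Z = {}" using nz by auto
  obtain d where d: "d > 0" "\<forall>p\<in>{a} \<times> K. \<forall>q\<in>?Z. d \<le> dist p q"
    using separate_compact_closed[OF compact closed disjoint] by blast
  show thesis
  proof (rule that[OF \<open>d > 0\<close>])
    fix x y assume "\<bar>x - a\<bar> < d" "y \<in> K"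
    then have "dist (a, y) (x, y) < d" by (simp add: dist_Pair_Pair dist_real_def)
    moreover have "(a, y) \<in> {a} \<times> K" using \<open>y \<in> K\<close> by simp
    ultimately have "(x, y) \<notin> ?Z" using d(2) by force
    then show "F x y \<noteq> 0" by simp
  qed
qed

lemma root_curve_eventually_avoids:
  fixes F :: "real \<Rightarrow> real \<Rightarrow> real" and \<phi> :: "real \<Rightarrow> real"
  assumes F: "continuous_on UNIV (\<lambda>(x, y). F x y)"
    and curve: "eventually (\<lambda>x. F x (\<phi> x) = 0) (at_right a)"
    and K: "compact K" and nz: "\<forall>y\<in>K. F a y \<noteq> 0"
  shows "eventually (\<lambda>x. \<phi> x \<notin> K) (at_right a)"
proof -
  obtain \<eta> where \<eta>: "\<eta> > 0" "\<And>x y. \<bar>x - a\<bar> < \<eta> \<Longrightarrow> y \<in> K \<Longrightarrow> F x y \<noteq> 0"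
    using nonzero_near_compact_fibre[OF F K nz] by blast
  have "eventually (\<lambda>x. \<bar>x - a\<bar> < \<eta>) (at_right a)"
    unfolding eventually_at_right_field using \<eta>(1)
    by (intro exI[of _ "a + \<eta>"]) auto
  with curve show ?thesis
    by eventually_elim (use \<eta>(2) in force)
qed

lemma root_curve_tendsto_isolated_zero:
  fixes F :: "real \<Rightarrow> real \<Rightarrow> real" and \<phi> :: "real \<Rightarrow> real"
  assumes F: "continuous_on UNIV (\<lambda>(x, y). F x y)"
    and curve: "eventually (\<lambda>x. F x (\<phi> x) = 0) (at_right a)"
    and trap: "eventually (\<lambda>x. lo < \<phi> x \<and> \<phi> x < hi) (at_right a)"
    and only: "\<And>y. y \<in> {lo..hi} \<Longrightarrow> F a y = 0 \<Longrightarrow> y = y0"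
  shows "(\<phi> \<longlongrightarrow> y0) (at_right a)"
  unfolding tendsto_iff
proof (intro allI impI)
  fix e :: real assume "e > 0"
  let ?K = "{lo..min hi (y0 - e)} \<union> {max lo (y0 + e)..hi}"
  have "F a y \<noteq> 0" if "y \<in> ?K" for y
    using only[of y] that \<open>e > 0\<close> by auto
  then have "eventually (\<lambda>x. \<phi> x \<notin> ?K) (at_right a)"
    by (intro root_curve_eventually_avoids[OF F curve]) auto
  with trap show "eventually (\<lambda>x. dist (\<phi> x) y0 < e) (at_right a)"
    by eventually_elim (auto simp: dist_real_def)
qed

lemma root_curve_tends_to_bot:
  fixes F :: "real \<Rightarrow> real \<Rightarrow> real" and \<phi> :: "real \<Rightarrow> real"
  assumes F: "continuous_on UNIV (\<lambda>(x, y). F x y)"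
    and curve: "eventually (\<lambda>x. F x (\<phi> x) = 0) (at_right a)"
    and below: "eventually (\<lambda>x. \<phi> x < hi) (at_right a)"
    and nz: "\<And>y. y \<le> hi \<Longrightarrow> F a y \<noteq> 0"
  shows "filterlim \<phi> at_bot (at_right a)"
  unfolding filterlim_at_bot
proof
  fix Z :: real
  have "eventually (\<lambda>x. \<phi> x \<notin> {min Z hi..hi}) (at_right a)"
    using nz by (intro root_curve_eventually_avoids[OF F curve]) auto
  with below show "eventually (\<lambda>x. \<phi> x \<le> Z) (at_right a)"
    by eventually_elim auto
qed

lemma root_curve_tends_to_top:
  fixes F :: "real \<Rightarrow> real \<Rightarrow> real" and \<phi> :: "real \<Rightarrow> real"
  assumes F: "continuous_on UNIV (\<lambda>(x, y). F x y)"
    and curve: "eventually (\<lambda>x. F x (\<phi> x) = 0) (at_right a)"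
    and above: "eventually (\<lambda>x. lo < \<phi> x) (at_right a)"
    and nz: "\<And>y. lo \<le> y \<Longrightarrow> F a y \<noteq> 0"
  shows "filterlim \<phi> at_top (at_right a)"
  unfolding filterlim_at_top
proof
  fix Z :: real
  have "eventually (\<lambda>x. \<phi> x \<notin> {lo..max Z lo}) (at_right a)"
    using nz by (intro root_curve_eventually_avoids[OF F curve]) auto
  with above show "eventually (\<lambda>x. Z \<le> \<phi> x) (at_right a)"
    by eventually_elim auto
qed

lemma same_side_of_avoided_value:
  fixes \<phi> :: "real \<Rightarrow> real"
  assumes c: "continuous_on {a<..b} \<phi>" and avoid: "\<forall>x\<in>{a<..b}. \<phi> x \<noteq> v"
    and x: "x \<in> {a<..b}"
  shows "\<phi> x < v \<longleftrightarrow> \<phi> b < v"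
proof -
  have cxb: "continuous_on {x..b} \<phi>" using x by (auto intro: continuous_on_subset[OF c])
  have "\<exists>z. x \<le> z \<and> z \<le> b \<and> \<phi> z = v" if "(\<phi> x < v) \<noteq> (\<phi> b < v)"
  proof (cases "\<phi> x < v")
    case True
    then show ?thesis using that x by (intro IVT' cxb) auto
  next
    case False
    then show ?thesis using that x by (intro IVT2' cxb) auto
  qed
  then show ?thesis using avoid x by force
qed

lemma interleaved_position:
  fixes y t :: "nat \<Rightarrow> real"
  assumes mono: "\<forall>k\<in>{1..n}. \<forall>l\<in>{1..n}. k < l \<longrightarrow> y k < y l"
    and sep: "\<forall>i\<in>{1..n}. t i < y i \<and> y i < t (i + 1)"
    and k: "k \<in> {1..n}" and i: "i \<in> {1..n + 1}"
  shows "(k < i \<longrightarrow> y k < t i) \<and> (i \<le> k \<longrightarrow> t i < y k)"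
proof -
  have le: "y k \<le> y l" if "k \<le> l" "k \<in> {1..n}" "l \<in> {1..n}" for k l
    using mono that by (cases "k = l") (auto intro: less_imp_le)
  have "y k < t i" if "k < i"
  proof -
    have prev: "i - 1 \<in> {1..n}" "i - 1 + 1 = i" using that k i by auto
    have "y k \<le> y (i - 1)" using le[of k "i - 1"] that prev k by auto
    also have "\<dots> < t i" using sep prev by metis
    finally show ?thesis .
  qed
  moreover have "t i < y k" if "i \<le> k"
  proof -
    have "t i < y i" using sep that k i by auto
    also have "\<dots> \<le> y k" using le[of i k] that k i by auto
    finally show ?thesis .
  qed
  ultimately show ?thesis by blast
qed

lemma interleaved_unique_in_gap:
  fixes y t :: "nat \<Rightarrow> real"
  assumes mono: "\<forall>k\<in>{1..n}. \<forall>l\<in>{1..n}. k < l \<longrightarrow> y k < y l"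
    and sep: "\<forall>i\<in>{1..n}. t i < y i \<and> y i < t (i + 1)"
    and k: "k \<in> {1..n}" and i: "i \<in> {1..n}"
    and gap: "t i \<le> y k" "y k \<le> t (i + 1)"
  shows "k = i"
proof -
  have "\<not> k < i" using interleaved_position[OF mono sep k, of i] i gap by auto
  moreover have "\<not> i + 1 \<le> k" using interleaved_position[OF mono sep k, of "i + 1"] i gap by auto
  ultimately show ?thesis by linarith
qed

lemma interleaved_between_ends:
  fixes y t :: "nat \<Rightarrow> real"
  assumes mono: "\<forall>k\<in>{1..n}. \<forall>l\<in>{1..n}. k < l \<longrightarrow> y k < y l"
    and sep: "\<forall>i\<in>{1..n}. t i < y i \<and> y i < t (i + 1)"
    and k: "k \<in> {1..n}"
  shows "t 1 < y k" "y k < t (n + 1)"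
  using interleaved_position[OF mono sep k, of 1] interleaved_position[OF mono sep k, of "n + 1"] k
  by auto

lemma curve_keeps_side:
  fixes \<phi> :: "real \<Rightarrow> real"
  assumes ab: "a < b" and c: "continuous_on {a<..b} \<phi>" and avoid: "\<forall>x\<in>{a<..b}. \<phi> x \<noteq> v"
  shows "\<phi> b < v \<Longrightarrow> eventually (\<lambda>x. \<phi> x < v) (at_right a)"
    and "v < \<phi> b \<Longrightarrow> eventually (\<lambda>x. v < \<phi> x) (at_right a)"
proof -
  have near: "eventually (\<lambda>x. x \<in> {a<..b}) (at_right a)"
    unfolding eventually_at_right_field using ab by (intro exI[of _ b]) auto
  show "eventually (\<lambda>x. \<phi> x < v) (at_right a)" if "\<phi> b < v"
    using near by eventually_elim (use same_side_of_avoided_value[OF c avoid] that in blast)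
  show "eventually (\<lambda>x. v < \<phi> x) (at_right a)" if "v < \<phi> b"
    using near by eventually_elim
      (use same_side_of_avoided_value[OF c avoid] avoid that in \<open>force simp: not_less order_le_less\<close>)
qed

lemma root_curve_limits_at_left_end:
  fixes F :: "real \<Rightarrow> real \<Rightarrow> real" and \<phi> :: "real \<Rightarrow> real" and y t :: "nat \<Rightarrow> real"
  assumes F: "continuous_on UNIV (\<lambda>(x, y). F x y)" and ab: "a < b"
    and c: "continuous_on {a<..b} \<phi>" and curve: "\<forall>x\<in>{a<..b}. F x (\<phi> x) = 0"
    and zeros: "\<And>z. F a z = 0 \<Longrightarrow> z \<in> y ` {1..n}"
    and mono: "\<forall>k\<in>{1..n}. \<forall>l\<in>{1..n}. k < l \<longrightarrow> y k < y l"
    and sep: "\<forall>i\<in>{1..n}. t i < y i \<and> y i < t (i + 1)"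
    and lines: "\<forall>x\<in>{a<..b}. \<forall>i\<in>{1..n + 1}. F x (t i) \<noteq> 0"
  shows "\<And>i. i \<in> {1..n} \<Longrightarrow> t i < \<phi> b \<Longrightarrow> \<phi> b < t (i + 1) \<Longrightarrow> (\<phi> \<longlongrightarrow> y i) (at_right a)"
    and "\<phi> b < t 1 \<Longrightarrow> filterlim \<phi> at_bot (at_right a)"
    and "t (n + 1) < \<phi> b \<Longrightarrow> filterlim \<phi> at_top (at_right a)"
proof -
  have ev_curve: "eventually (\<lambda>x. F x (\<phi> x) = 0) (at_right a)"
    unfolding eventually_at_right_field using ab curve by (intro exI[of _ b]) auto
  have avoid: "\<forall>x\<in>{a<..b}. \<phi> x \<noteq> t i" if "i \<in> {1..n + 1}" for i
    using curve lines that by force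
  note side = curve_keeps_side[OF ab c avoid]
  show "(\<phi> \<longlongrightarrow> y i) (at_right a)" if i: "i \<in> {1..n}" and gap: "t i < \<phi> b" "\<phi> b < t (i + 1)" for i
  proof (rule root_curve_tendsto_isolated_zero[OF F ev_curve])
    show "eventually (\<lambda>x. t i < \<phi> x \<and> \<phi> x < t (i + 1)) (at_right a)"
      using i gap by (intro eventually_conj side) auto
    show "z = y i" if z: "z \<in> {t i..t (i + 1)}" "F a z = 0" for z
    proof -
      obtain k where k: "k \<in> {1..n}" "z = y k" using zeros[OF z(2)] by blast
      have "k = i" by (rule interleaved_unique_in_gap[OF mono sep k(1) i]) (use k z in auto)
      then show ?thesis using k by simp
    qed
  qed
  show "filterlim \<phi> at_bot (at_right a)" if "\<phi> b < t 1"
    using that interleaved_between_ends(1)[OF mono sep] zeros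
    by (intro root_curve_tends_to_bot[OF F ev_curve side(1)[of 1]]) force+
  show "filterlim \<phi> at_top (at_right a)" if "t (n + 1) < \<phi> b"
    using that interleaved_between_ends(2)[OF mono sep] zeros
    by (intro root_curve_tends_to_top[OF F ev_curve side(2)[of "n + 1"]]) force+
qed

text \<open>The main theorem is the instance F = eval2 f, \<phi> = \<phi>_j on (\<alpha>, b].  The
  hypotheses on squarefreeness, the absence of factors in Z[x], \<alpha> being a root
  of R and the ordering of the \<phi>_k are what make the arcs \<phi>_k exist; the limit
  statement itself only needs the remaining ones.\<close>

theorem mainTheorem5:
  fixes f :: "int poly poly"
    and \<alpha> :: real and b :: rat
    and mI :: nat and \<phi> :: "nat \<Rightarrow> real \<Rightarrow> real"
    and ma :: nat and ys :: "nat \<Rightarrow> real" and t :: "nat \<Rightarrow> rat"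
    and j :: nat
  defines "R \<equiv> res_y f"
  defines "I \<equiv> {x::real. \<alpha> < x \<and> (\<forall>z. \<alpha> < z \<and> z \<le> x \<longrightarrow> poly (of_int_poly R) z \<noteq> 0)}"
  assumes sqf: "squarefree f"
    and no_x_factor: "\<forall>g::int poly. [:g:] dvd f \<longrightarrow> degree g = 0"
    and alpha_root: "poly (of_int_poly R) \<alpha> = 0"
    and phi_cont: "\<forall>k\<in>{1..mI}. continuous_on I (\<phi> k)"
    and phi_mono: "\<forall>x\<in>I. \<forall>k\<in>{1..mI}. \<forall>l\<in>{1..mI}. k < l \<longrightarrow> \<phi> k x < \<phi> l x"
    and phi_graph: "\<forall>x\<in>I. {y. eval2 f x y = 0} = (\<lambda>k. \<phi> k x) ` {1..mI}"
    and ys_mono: "\<forall>k\<in>{1..ma}. \<forall>l\<in>{1..ma}. k < l \<longrightarrow> ys k < ys l"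
    and ys_roots: "{y. eval2 f \<alpha> y = 0} = ys ` {1..ma}"
    and t_sep: "\<forall>i\<in>{1..ma}. real_of_rat (t i) < ys i \<and> ys i < real_of_rat (t (i + 1))"
    and b_in: "real_of_rat b \<in> I"
    and t_nonzero: "\<forall>x\<in>{\<alpha>..real_of_rat b}. \<forall>i\<in>{1..ma + 1}. eval2 f x (real_of_rat (t i)) \<noteq> 0"
    and j_range: "j \<in> {1..mI}"
  shows "(\<forall>i0\<in>{1..ma}. real_of_rat (t i0) < \<phi> j (real_of_rat b) \<and>
             \<phi> j (real_of_rat b) < real_of_rat (t (i0 + 1)) \<longrightarrow>
             (\<phi> j \<longlongrightarrow> ys i0) (at_right \<alpha>))
      \<and> (\<phi> j (real_of_rat b) < real_of_rat (t 1) \<longrightarrow> filterlim (\<phi> j) at_bot (at_right \<alpha>))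
      \<and> (\<phi> j (real_of_rat b) > real_of_rat (t (ma + 1)) \<longrightarrow> filterlim (\<phi> j) at_top (at_right \<alpha>))"
proof -
  have sub: "{\<alpha><..real_of_rat b} \<subseteq> I" using b_in by (auto simp: I_def)
  have ab: "\<alpha> < real_of_rat b" using b_in by (simp add: I_def)
  have cont: "continuous_on {\<alpha><..real_of_rat b} (\<phi> j)"
    using phi_cont j_range continuous_on_subset[OF _ sub] by blast
  have curve: "\<forall>x\<in>{\<alpha><..real_of_rat b}. eval2 f x (\<phi> j x) = 0"
    using phi_graph j_range sub by blast
  have zeros: "\<And>z. eval2 f \<alpha> z = 0 \<Longrightarrow> z \<in> ys ` {1..ma}"
    using ys_roots by blast
  have lines: "\<forall>x\<in>{\<alpha><..real_of_rat b}. \<forall>i\<in>{1..ma + 1}. eval2 f x (real_of_rat (t i)) \<noteq> 0"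
    using t_nonzero by auto
  note limits = root_curve_limits_at_left_end[OF continuous_on_eval2 ab cont curve zeros
      ys_mono t_sep lines]
  show ?thesis using limits by blast
qed

end
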